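(* Let $n\ge 1$, let $\bar{X}_T=(X_T^1,\dots,X_T^n)$ be a random vector with values in $[0,\infty)^n$ and $\mathbb{Q}$ a pricing measure. For $0<p<\infty$ define $$h_p(\bar{x},\bar{K},K)=\left(\left(\sum_{i=1}^{n}\big((x_i-K_i)^{+}\big)^p\right)^{1/p}-K\right)^{+},\qquad \bar{x},\bar{K}\in[0,\infty)^n,\ K\ge0,$$ let $h_\infty=\lim_{p\to\infty}h_p$ pointwise (so $h_\infty(\bar{x},\bar{K},K)=(\max_i(x_i-K_i)^+-K)^+$), and set $V^p(\bar{K},K)=\mathbb{E}_{\mathbb{Q}}[h_p(\bar{X}_T,\bar{K},K)]$ for $0<p\le\infty$. Then for every $0<p\le\infty$ and all $K_1,\dots,K_n\ge0$, $$\sum_{i=1}^{n}\ \lim_{K_j\to\infty \text{ for all } j\neq i} V^p(K_1,\dots,K_n,0)=V^1(K_1,\dots,K_n,0).$$ The analogous identity holds for the payoff functions, i.e. for every $\bar{x}\in[0,\infty)^n$, $\sum_{i=1}^n \lim_{K_j\to\infty,\, j\ne i} h_p(\bar{x},K_1,\dots,K_n,0)=h_1(\bar{x},K_1,\dots,K_n,0)$, with the limits taken pointwise.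
   Context: Market model with deterministic interest rate, normalized to zero, so the price of a European option with payoff $f(\bar{X}_T)$ is $\mathbb{E}_{\mathbb{Q}}[f(\bar{X}_T)]$ under a (not necessarily unique) pricing measure $\mathbb{Q}$; $\bar{X}_T$ is the vector of asset prices at maturity. The option prices $V^p$ are assumed finite. $y^+=\max(y,0)$. *)

theory Defs
  imports "HOL-Probability.Probability"
begin

definition pos_part :: "real \<Rightarrow> real" where
  "pos_part y = max y 0"

definition payoff :: "ereal \<Rightarrow> real ^ 'n::finite \<Rightarrow> real ^ 'n \<Rightarrow> real \<Rightarrow> real" where
  "payoff p x Kv K =
     (if p = \<infinity> then pos_part ((MAX i\<in>UNIV. pos_part (x $ i - Kv $ i)) - K)
      else pos_part ((\<Sum>i\<in>UNIV. (pos_part (x $ i - Kv $ i)) powr (real_of_ereal p))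
                       powr (1 / real_of_ereal p) - K))"

definition price :: "'a measure \<Rightarrow> ('a \<Rightarrow> real ^ 'n::finite) \<Rightarrow> ereal \<Rightarrow> real ^ 'n \<Rightarrow> real \<Rightarrow> real" where
  "price Q X p Kv K = (\<integral>\<omega>. payoff p (X \<omega>) Kv K \<partial>Q)"

definition with_coord :: "real ^ 'n \<Rightarrow> 'n \<Rightarrow> real ^ 'n \<Rightarrow> real ^ 'n" where
  "with_coord Kv i L = (\<chi> j. if j = i then Kv $ i else L $ j)"

definition others_to_infty :: "'n \<Rightarrow> (real ^ 'n) filter" where
  "others_to_infty i = (INF j\<in>UNIV - {i}. filtercomap (\<lambda>L. L $ j) at_top)"

end

theory Submission
  imports Defs
begin

text \<open>Once every strike \<open>K\<^sub>j\<close>, \<open>j \<noteq> i\<close>, exceeds all asset prices, every call except the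
  \<open>i\<close>-th one is out of the money, so \<open>h\<^sub>p\<close> collapses to the single call \<open>(x\<^sub>i - K\<^sub>i)\<^sup>+\<close> for
  every \<open>p\<close>; and \<open>h\<^sub>1\<close> is the sum of these calls. For the prices, the payoff differs from
  the single call only on the event that some price exceeds the large strikes; there it is
  dominated by the integrable \<open>h\<^sub>p(X, 0, 0) + (X\<^sub>i - K\<^sub>i)\<^sup>+\<close>, and the event shrinks to the
  empty set, so the error vanishes by dominated convergence.\<close>

lemma pos_part_nonneg [simp]: "pos_part y \<ge> 0"
  by (simp add: pos_part_def)

lemma pos_part_eq_self: "y \<ge> 0 \<Longrightarrow> pos_part y = y"
  by (simp add: pos_part_def)

lemma pos_part_mono: "a \<le> b \<Longrightarrow> pos_part a \<le> pos_part b"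
  by (simp add: pos_part_def)

lemma pos_part_idem [simp]: "pos_part (pos_part y) = pos_part y"
  by (simp add: pos_part_def)

lemma payoff_nonneg: "payoff p x Kv K \<ge> 0"
  by (simp add: payoff_def)

lemma with_coord_nth [simp]: "with_coord Kv i L $ j = (if j = i then Kv $ i else L $ j)"
  by (simp add: with_coord_def)

lemma payoff_one_eq_sum_calls: "payoff 1 x Kv 0 = (\<Sum>i\<in>UNIV. pos_part (x $ i - Kv $ i))"
  by (simp add: payoff_def pos_part_eq_self sum_nonneg)

lemma call_le_payoff_one: "pos_part (x $ i - Kv $ i) \<le> payoff 1 x Kv 0"
  unfolding payoff_one_eq_sum_calls by (rule member_le_sum) auto

lemma ereal_pos_cases:
  assumes "(p::ereal) > 0"
  obtains "p = \<infinity>" | r where "p = ereal r" "r > 0"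
  using assms by (cases p) auto

lemma payoff_single_call:
  assumes "p > 0" and out_of_money: "\<forall>j. j \<noteq> i \<longrightarrow> x $ j \<le> Kv $ j"
  shows "payoff p x Kv K = pos_part (pos_part (x $ i - Kv $ i) - K)"
proof -
  let ?c = "\<lambda>j. pos_part (x $ j - Kv $ j)"
  have other_calls_vanish: "?c j = 0" if "j \<noteq> i" for j
    using out_of_money that by (simp add: pos_part_def)
  from \<open>p > 0\<close> show ?thesis
  proof (cases rule: ereal_pos_cases)
    case 1
    have "?c j \<le> ?c i" for j
      by (cases "j = i") (simp_all add: other_calls_vanish)
    then have "(MAX j\<in>UNIV. ?c j) = ?c i"
      by (intro Max_eqI) auto
    then show ?thesis using 1 by (simp add: payoff_def)
  next
    case (2 r)
    have "(\<Sum>j\<in>UNIV. ?c j powr r) = (\<Sum>j\<in>{i}. ?c j powr r)"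
      by (rule sum.mono_neutral_right) (auto simp: other_calls_vanish)
    moreover have "(?c i powr r) powr (1 / r) = ?c i"
      using \<open>r > 0\<close> by (simp add: powr_powr)
    ultimately show ?thesis using 2 by (simp add: payoff_def)
  qed
qed

lemma payoff_antimono_strike:
  assumes "p > 0" "\<forall>j. A $ j \<le> B $ j"
  shows "payoff p x B K \<le> payoff p x A K"
proof -
  have calls_le: "pos_part (x $ j - B $ j) \<le> pos_part (x $ j - A $ j)" for j
    using assms(2) by (intro pos_part_mono) (simp add: algebra_simps)
  from \<open>p > 0\<close> show ?thesis
  proof (cases rule: ereal_pos_cases)
    case 1
    have "pos_part (x $ j - B $ j) \<le> (MAX j\<in>UNIV. pos_part (x $ j - A $ j))" for j
      using calls_le[of j] by (rule order_trans) (rule Max_ge; simp)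
    then have "(MAX j\<in>UNIV. pos_part (x $ j - B $ j)) \<le> (MAX j\<in>UNIV. pos_part (x $ j - A $ j))"
      by simp
    then show ?thesis using 1 by (simp add: payoff_def pos_part_mono)
  next
    case (2 r)
    have "(\<Sum>j\<in>UNIV. pos_part (x $ j - B $ j) powr r) \<le> (\<Sum>j\<in>UNIV. pos_part (x $ j - A $ j) powr r)"
      using 2 by (intro sum_mono powr_mono2 calls_le) auto
    then have "(\<Sum>j\<in>UNIV. pos_part (x $ j - B $ j) powr r) powr (1/r)
        \<le> (\<Sum>j\<in>UNIV. pos_part (x $ j - A $ j) powr r) powr (1/r)"
      using 2 by (intro powr_mono2) (auto intro: sum_nonneg)
    then show ?thesis using 2 by (simp add: payoff_def pos_part_mono)
  qed
qed

lemma eventually_others_to_infty_ge: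
  "eventually (\<lambda>L. \<forall>j. j \<noteq> i \<longrightarrow> t \<le> L $ j) (others_to_infty i)"
  unfolding others_to_infty_def
  by (subst eventually_INF_finite)
     (auto intro!: exI[of _ "\<lambda>j L. t \<le> L $ j"] simp: eventually_filtercomap_at_top_linorder)

lemma vec_nth_le_norm: "x $ j \<le> norm (x :: real ^ 'n)"
  using abs_ge_self component_le_norm_cart by (rule order_trans)

lemma tendsto_payoff_single_call:
  assumes "p > 0"
  shows "((\<lambda>L. payoff p x (with_coord Kv i L) K) \<longlongrightarrow> pos_part (pos_part (x $ i - Kv $ i) - K))
           (others_to_infty i)"
  using eventually_others_to_infty_ge[of i "norm x"]
proof (rule tendsto_eventually[OF eventually_mono])
  fix L assume "\<forall>j. j \<noteq> i \<longrightarrow> norm x \<le> L $ j"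
  then have "\<forall>j. j \<noteq> i \<longrightarrow> x $ j \<le> with_coord Kv i L $ j"
    by (auto intro: order_trans[OF vec_nth_le_norm])
  then show "payoff p x (with_coord Kv i L) K = pos_part (pos_part (x $ i - Kv $ i) - K)"
    using payoff_single_call[OF \<open>p > 0\<close>, of i x "with_coord Kv i L" K] by simp
qed

lemma payoff_single_call_error_le:
  assumes "p > 0" "\<forall>j. 0 \<le> c $ j" and large: "\<forall>j. j \<noteq> i \<longrightarrow> t \<le> c $ j"
  shows "\<bar>payoff p x c 0 - pos_part (x $ i - c $ i)\<bar>
           \<le> (payoff p x 0 0 + pos_part (x $ i - c $ i)) * indicator {y. t < norm y} x"
proof (cases "t < norm x")
  case True
  have "payoff p x c 0 \<le> payoff p x 0 0"
    using assms(1,2) by (intro payoff_antimono_strike) simp_all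
  moreover have "0 \<le> payoff p x c 0" "0 \<le> pos_part (x $ i - c $ i)"
    by (simp_all add: payoff_nonneg)
  ultimately show ?thesis using True by (simp add: abs_le_iff del: pos_part_nonneg)
next
  case False
  then have "\<forall>j. j \<noteq> i \<longrightarrow> x $ j \<le> c $ j"
    using large by (meson vec_nth_le_norm not_less order_trans)
  then show ?thesis using False payoff_single_call[OF \<open>p > 0\<close>, of i x c 0] by simp
qed

lemma tendsto_integral_tail:
  fixes g f :: "'a \<Rightarrow> real"
  assumes "integrable M g" "f \<in> borel_measurable M"
  shows "((\<lambda>t. \<integral>\<omega>. g \<omega> * indicator {\<omega> \<in> space M. t < f \<omega>} \<omega> \<partial>M) \<longlongrightarrow> 0) at_top"
proof -
  have "((\<lambda>t. \<integral>\<omega>. g \<omega> * indicator {\<omega> \<in> space M. t < f \<omega>} \<omega> \<partial>M) \<longlongrightarrow> \<integral>\<omega>. 0 \<partial>M) at_top"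
  proof (rule integral_dominated_convergence_at_top[where w = "\<lambda>\<omega>. norm (g \<omega>)"])
    show "AE \<omega> in M. ((\<lambda>t. g \<omega> * indicator {\<omega> \<in> space M. t < f \<omega>} \<omega>) \<longlongrightarrow> 0) at_top"
    proof (rule AE_I2)
      fix \<omega>
      show "((\<lambda>t. g \<omega> * indicator {\<omega> \<in> space M. t < f \<omega>} \<omega>) \<longlongrightarrow> 0) at_top"
        by (rule tendsto_eventually, rule eventually_mono[OF eventually_ge_at_top[of "f \<omega>"]]) auto
    qed
  qed (use assms in \<open>auto simp: indicator_def\<close>)
  then show ?thesis by simp
qed

lemma integrable_call_of_payoff_one:
  fixes X :: "'a \<Rightarrow> real ^ 'n::finite"
  assumes "X \<in> borel_measurable Q" "integrable Q (\<lambda>\<omega>. payoff 1 (X \<omega>) Kv 0)"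
  shows "integrable Q (\<lambda>\<omega>. pos_part (X \<omega> $ i - Kv $ i))"
proof (rule Bochner_Integration.integrable_bound[OF assms(2)])
  show "(\<lambda>\<omega>. pos_part (X \<omega> $ i - Kv $ i)) \<in> borel_measurable Q"
    unfolding pos_part_def
    by (intro borel_measurable_max borel_measurable_diff
        measurable_compose[OF assms(1) borel_measurable_nth]) simp_all
  show "AE \<omega> in Q. norm (pos_part (X \<omega> $ i - Kv $ i)) \<le> norm (payoff 1 (X \<omega>) Kv 0)"
    by (intro AE_I2) (simp add: payoff_nonneg call_le_payoff_one)
qed

lemma price_single_call_error_le:
  fixes X :: "'a \<Rightarrow> real ^ 'n::finite"
  assumes "X \<in> borel_measurable Q" "p > 0" "\<forall>j. 0 \<le> c $ j" "\<forall>j. j \<noteq> i \<longrightarrow> t \<le> c $ j"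
    and integrable_c: "integrable Q (\<lambda>\<omega>. payoff p (X \<omega>) c 0)"
    and integrable_0: "integrable Q (\<lambda>\<omega>. payoff p (X \<omega>) 0 0)"
    and integrable_call: "integrable Q (\<lambda>\<omega>. pos_part (X \<omega> $ i - c $ i))"
  shows "dist (price Q X p c 0) (\<integral>\<omega>. pos_part (X \<omega> $ i - c $ i) \<partial>Q)
           \<le> \<integral>\<omega>. (payoff p (X \<omega>) 0 0 + pos_part (X \<omega> $ i - c $ i))
                  * indicator {\<omega> \<in> space Q. t < norm (X \<omega>)} \<omega> \<partial>Q"
    (is "_ \<le> integral\<^sup>L Q ?bound")
proof -
  let ?a = "\<lambda>\<omega>. pos_part (X \<omega> $ i - c $ i)"
  have "{\<omega> \<in> space Q. t < norm (X \<omega>)} \<in> sets Q"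
    using assms(1) by measurable
  then have integrable_bound: "integrable Q ?bound"
    using integrable_0 integrable_call
    by (intro integrable_real_mult_indicator Bochner_Integration.integrable_add)
  have error_le: "\<bar>payoff p (X \<omega>) c 0 - ?a \<omega>\<bar> \<le> ?bound \<omega>" if "\<omega> \<in> space Q" for \<omega>
  proof -
    have "indicator {y. t < norm y} (X \<omega>) = (indicator {\<omega> \<in> space Q. t < norm (X \<omega>)} \<omega> :: real)"
      using that by (simp add: indicator_def)
    then show ?thesis
      using payoff_single_call_error_le[OF assms(2-4), of "X \<omega>"] by simp
  qed
  have "dist (price Q X p c 0) (integral\<^sup>L Q ?a) = \<bar>\<integral>\<omega>. payoff p (X \<omega>) c 0 - ?a \<omega> \<partial>Q\<bar>"
    unfolding price_def dist_real_def
    using Bochner_Integration.integral_diff[OF integrable_c integrable_call] by simp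
  also have "\<dots> \<le> \<integral>\<omega>. \<bar>payoff p (X \<omega>) c 0 - ?a \<omega>\<bar> \<partial>Q"
    by (rule integral_abs_bound)
  also have "\<dots> \<le> integral\<^sup>L Q ?bound"
    using integrable_c integrable_call
    by (intro integral_mono integrable_bound error_le integrable_abs Bochner_Integration.integrable_diff)
  finally show ?thesis .
qed

lemma tendsto_price_single_call:
  fixes X :: "'a \<Rightarrow> real ^ 'n::finite"
  assumes "X \<in> borel_measurable Q" "p > 0" "\<forall>j. 0 \<le> Kv $ j"
    and integrable_payoff: "\<And>c. \<forall>j. 0 \<le> c $ j \<Longrightarrow> integrable Q (\<lambda>\<omega>. payoff p (X \<omega>) c 0)"
    and integrable_call: "integrable Q (\<lambda>\<omega>. pos_part (X \<omega> $ i - Kv $ i))"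
  shows "((\<lambda>L. price Q X p (with_coord Kv i L) 0) \<longlongrightarrow> \<integral>\<omega>. pos_part (X \<omega> $ i - Kv $ i) \<partial>Q)
           (others_to_infty i)"
proof (rule tendstoI)
  fix e :: real assume "e > 0"
  define g where "g t = (\<integral>\<omega>. (payoff p (X \<omega>) 0 0 + pos_part (X \<omega> $ i - Kv $ i))
                              * indicator {\<omega> \<in> space Q. t < norm (X \<omega>)} \<omega> \<partial>Q)" for t
  have integrable_0: "integrable Q (\<lambda>\<omega>. payoff p (X \<omega>) 0 0)"
    by (rule integrable_payoff) simp
  have "(\<lambda>\<omega>. norm (X \<omega>)) \<in> borel_measurable Q"
    using assms(1) by measurable
  with integrable_0 integrable_call have "(g \<longlongrightarrow> 0) at_top"
    unfolding g_def by (intro tendsto_integral_tail Bochner_Integration.integrable_add)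
  from order_tendstoD(2)[OF this \<open>e > 0\<close>] obtain T where "\<forall>t\<ge>T. g t < e"
    unfolding eventually_at_top_linorder by blast
  then have "max T 0 \<ge> 0" "g (max T 0) < e"
    by simp_all
  then obtain t where "t \<ge> 0" "g t < e" by blast
  show "\<forall>\<^sub>F L in others_to_infty i.
      dist (price Q X p (with_coord Kv i L) 0) (\<integral>\<omega>. pos_part (X \<omega> $ i - Kv $ i) \<partial>Q) < e"
    using eventually_others_to_infty_ge[of i t]
  proof eventually_elim
    case (elim L)
    then have strikes: "\<forall>j. 0 \<le> with_coord Kv i L $ j" "\<forall>j. j \<noteq> i \<longrightarrow> t \<le> with_coord Kv i L $ j"
      using \<open>t \<ge> 0\<close> assms(3) by auto
    have "dist (price Q X p (with_coord Kv i L) 0) (\<integral>\<omega>. pos_part (X \<omega> $ i - Kv $ i) \<partial>Q) \<le> g t"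
      using price_single_call_error_le[OF assms(1,2) strikes integrable_payoff[OF strikes(1)]
          integrable_0] integrable_call
      by (simp add: g_def)
    with \<open>g t < e\<close> show ?case by simp
  qed
qed

theorem mainTheorem2:
  fixes Q :: "'a measure" and X :: "'a \<Rightarrow> real ^ 'n::finite"
  assumes "prob_space Q"
    and "X \<in> borel_measurable Q"
    and "\<forall>\<omega>\<in>space Q. \<forall>i. X \<omega> $ i \<ge> 0"
    and "\<And>q Kv K. q > 0 \<Longrightarrow> (\<forall>i. Kv $ i \<ge> 0) \<Longrightarrow> K \<ge> 0 \<Longrightarrow>
           integrable Q (\<lambda>\<omega>. payoff q (X \<omega>) Kv K)"
    and "p > 0"
    and "\<forall>i. Kv $ i \<ge> 0"
  shows "(\<exists>l :: 'n \<Rightarrow> real.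
            (\<forall>i. ((\<lambda>L. price Q X p (with_coord Kv i L) 0) \<longlongrightarrow> l i) (others_to_infty i))
            \<and> (\<Sum>i\<in>UNIV. l i) = price Q X 1 Kv 0)
         \<and> (\<forall>x :: real ^ 'n. (\<forall>i. x $ i \<ge> 0) \<longrightarrow>
             (\<exists>l :: 'n \<Rightarrow> real.
               (\<forall>i. ((\<lambda>L. payoff p x (with_coord Kv i L) 0) \<longlongrightarrow> l i) (others_to_infty i))
               \<and> (\<Sum>i\<in>UNIV. l i) = payoff 1 x Kv 0))"
proof (intro conjI allI impI)
  have integrable_call: "integrable Q (\<lambda>\<omega>. pos_part (X \<omega> $ i - Kv $ i))" for i
    using assms(4)[OF _ assms(6) order_refl] by (intro integrable_call_of_payoff_one assms(2)) simp
  show "\<exists>l. (\<forall>i. ((\<lambda>L. price Q X p (with_coord Kv i L) 0) \<longlongrightarrow> l i) (others_to_infty i))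
            \<and> (\<Sum>i\<in>UNIV. l i) = price Q X 1 Kv 0"
  proof (intro exI[of _ "\<lambda>i. \<integral>\<omega>. pos_part (X \<omega> $ i - Kv $ i) \<partial>Q"] conjI allI)
    show "((\<lambda>L. price Q X p (with_coord Kv i L) 0) \<longlongrightarrow> \<integral>\<omega>. pos_part (X \<omega> $ i - Kv $ i) \<partial>Q)
            (others_to_infty i)" for i
      using assms(4)[OF assms(5) _ order_refl]
      by (rule tendsto_price_single_call[OF assms(2,5,6) _ integrable_call])
    show "(\<Sum>i\<in>UNIV. \<integral>\<omega>. pos_part (X \<omega> $ i - Kv $ i) \<partial>Q) = price Q X 1 Kv 0"
      unfolding price_def payoff_one_eq_sum_calls
      by (rule Bochner_Integration.integral_sum[symmetric]) (rule integrable_call)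
  qed
  show "\<exists>l. (\<forall>i. ((\<lambda>L. payoff p x (with_coord Kv i L) 0) \<longlongrightarrow> l i) (others_to_infty i))
            \<and> (\<Sum>i\<in>UNIV. l i) = payoff 1 x Kv 0" for x :: "real ^ 'n"
  proof (intro exI[of _ "\<lambda>i. pos_part (x $ i - Kv $ i)"] conjI allI)
    show "((\<lambda>L. payoff p x (with_coord Kv i L) 0) \<longlongrightarrow> pos_part (x $ i - Kv $ i)) (others_to_infty i)"
      for i
      using tendsto_payoff_single_call[OF assms(5), of x Kv i 0] by simp
  qed (rule payoff_one_eq_sum_calls[symmetric])
qed

end
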